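(* Let $X=\{m_1,\dots,m_n\}$ be a Macaulay basis of $M$ and let $s_1,\dots,s_k$ be a generating set of $\operatorname{Syz}(\operatorname{lf}(m_1),\dots,\operatorname{lf}(m_n))$ consisting of homogeneous elements with respect to the $B$-grading of $R^{\oplus n}$ associated to $b_i=\deg m_i$. For each $j$ choose $h_j=(h_{j1},\dots,h_{jn})\in R^{\oplus n}$ with $\sum_is_{ji}m_i=\sum_ih_{ji}m_i$ such that $h_j=0$ if $\sum_is_{ji}m_i=0$, and otherwise every homogeneous component of $h_j$ has degree at most $\deg\big(\sum_is_{ji}m_i\big)$ (such $h_j$ arise from a reduction $\sum_is_{ji}m_i\to_X^*0$), and set $s'_j=s_j-h_j\in\operatorname{Syz}(m_1,\dots,m_n)$. Suppose $R^{\oplus n}$ carries a $B'$-grading refining this $B$-grading, and that $s_1,\dots,s_k$ is a Macaulay basis of $\operatorname{Syz}(\operatorname{lf}(m_1),\dots,\operatorname{lf}(m_n))$ with respect to the $B'$-grading. Then $s'_1,\dots,s'_k$ is a Macaulay basis of $\operatorname{Syz}(m_1,\dots,m_n)$ with respect to the $B'$-grading.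
   Context: Standing setup. $\mathbf{k}$ is a field. $(A,+,0)$ is a finitely generated cancellative commutative monoid with a well-ordered total order such that $0<a$ for $a\ne0$ and $a\le a'\Rightarrow a+c\le a'+c$. $R=\bigoplus_{a\in A}R_a$ is a commutative Noetherian $\mathbf{k}$-algebra with $R_aR_{a'}\subseteq R_{a+a'}$. $B$ (and likewise $B'$) is a well-ordered totally ordered set with an action $(a,b)\mapsto a\cdot b$ of $A$ with $0\cdot b=b$, $(a+a')\cdot b=a\cdot(a'\cdot b)$, monotone and cancellative in each argument. $N=\bigoplus_{b\in B}N_b$ is a Noetherian $R$-module with $R_aN_b\subseteq N_{a\cdot b}$; $M\subseteq N$ an $R$-submodule. For a nonzero element $m$ of a graded module, $\deg m$ is the largest degree of a nonzero homogeneous component and $\operatorname{lf}(m)$ is that component. A finite set of nonzero elements $\{m_1,\dots,m_n\}$ of a submodule $P$ of a graded module is a Macaulay basis of $P$ (w.r.t. that grading) if the submodule generated by $\{\operatorname{lf}(p):0\ne p\in P\}$ equals that generated by $\operatorname{lf}(m_1),\dots,\operatorname{lf}(m_n)$. Reduction: $W_b(X)=\operatorname{span}_{\mathbf{k}}\{r\operatorname{lf}(x): x\in X,\ r\in R\text{ homogeneous},\ r\operatorname{lf}(x)\in N_b\}$; $m\to_X m'$ iff $\{b: m_b\ne0,\ m_b\in W_b(X)\}$ is nonempty with maximum $b$ and $m'=m-\sum_jr_jx_j$ with $x_j\in X$, $r_j$ homogeneous, $r_j\operatorname{lf}(x_j)\in N_b$, $m_b=\sum_jr_j\operatorname{lf}(x_j)$;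 $\to_X^*$ reflexive–transitive closure. Syzygies: $\operatorname{Syz}(u_1,\dots,u_n)=\{(f_i)\in R^{\oplus n}:\sum_if_iu_i=0\}$. The $B$-grading of $R^{\oplus n}$ associated to $b_1,\dots,b_n$ is $(R^{\oplus n})_b=\bigoplus_i\bigoplus_{a\in A:\ a\cdot b_i=b}R_ae_i$. A $B'$-grading $R^{\oplus n}=\bigoplus_{b'\in B'}(R^{\oplus n})'_{b'}$ (with $R_a(R^{\oplus n})'_{b'}\subseteq(R^{\oplus n})'_{a\cdot b'}$) refines the $B$-grading if there is an order-preserving map $g:B'\to B$ with $g(a\cdot b')=a\cdot g(b')$ and $(R^{\oplus n})_b=\bigoplus_{b'\in g^{-1}(b)}(R^{\oplus n})'_{b'}$ for all $b\in B$. *)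

theory Defs
  imports Main "HOL.Modules" "HOL-Library.Function_Algebras"
begin

inductive_set gen_monoid :: "'a::comm_monoid_add set \<Rightarrow> 'a set" for G where
  gm_zero: "0 \<in> gen_monoid G"
| gm_gen: "g \<in> G \<Longrightarrow> g \<in> gen_monoid G"
| gm_add: "x \<in> gen_monoid G \<Longrightarrow> y \<in> gen_monoid G \<Longrightarrow> x + y \<in> gen_monoid G"

definition is_decomp :: "('i \<Rightarrow> 'm::ab_group_add set) \<Rightarrow> 'm \<Rightarrow> ('i \<Rightarrow> 'm) \<Rightarrow> bool" where
  "is_decomp G m f \<longleftrightarrow> finite {i. f i \<noteq> 0} \<and> (\<forall>i. f i \<in> G i) \<and> m = (\<Sum>i\<in>{i. f i \<noteq> 0}. f i)"

definition is_grading :: "'m::ab_group_add set \<Rightarrow> ('i \<Rightarrow> 'm set) \<Rightarrow> bool" where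
  "is_grading C G \<longleftrightarrow>
     (\<forall>i. 0 \<in> G i \<and> (\<forall>x\<in>G i. \<forall>y\<in>G i. x + y \<in> G i \<and> - x \<in> G i)) \<and>
     (\<forall>m. m \<in> C \<longleftrightarrow> (\<exists>f. is_decomp G m f)) \<and>
     (\<forall>m\<in>C. \<exists>!f. is_decomp G m f)"

definition hcomp :: "('i \<Rightarrow> 'm::ab_group_add set) \<Rightarrow> 'i \<Rightarrow> 'm \<Rightarrow> 'm" where
  "hcomp G i m = (THE f. is_decomp G m f) i"

definition hdeg :: "('i::linorder \<Rightarrow> 'm::ab_group_add set) \<Rightarrow> 'm \<Rightarrow> 'i" where
  "hdeg G m = Max {i. hcomp G i m \<noteq> 0}"

definition lf :: "('i::linorder \<Rightarrow> 'm::ab_group_add set) \<Rightarrow> 'm \<Rightarrow> 'm" where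
  "lf G m = hcomp G (hdeg G m) m"

definition homogeneous :: "('i \<Rightarrow> 'm set) \<Rightarrow> 'm \<Rightarrow> bool" where
  "homogeneous G m \<longleftrightarrow> (\<exists>i. m \<in> G i)"

definition macaulay_basis ::
  "('r::comm_ring_1 \<Rightarrow> 'm::ab_group_add \<Rightarrow> 'm) \<Rightarrow> ('i::linorder \<Rightarrow> 'm set) \<Rightarrow> 'm set \<Rightarrow> 'm set \<Rightarrow> bool" where
  "macaulay_basis scale G P X \<longleftrightarrow> finite X \<and> X \<subseteq> P \<and> 0 \<notin> X \<and>
     module.span scale {lf G p | p. p \<in> P \<and> p \<noteq> 0} = module.span scale (lf G ` X)"

definition noetherian_module :: "('r::comm_ring_1 \<Rightarrow> 'm::ab_group_add \<Rightarrow> 'm) \<Rightarrow> bool" where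
  "noetherian_module scale \<longleftrightarrow>
     (\<forall>S. module.subspace scale S \<longrightarrow> (\<exists>F. finite F \<and> module.span scale F = S))"

(* The free module R^n, represented as functions nat => R vanishing outside {..<n} *)
definition free_carrier :: "nat \<Rightarrow> (nat \<Rightarrow> 'r::zero) set" where
  "free_carrier n = {f. \<forall>i\<ge>n. f i = 0}"

definition vscale :: "'r::comm_ring_1 \<Rightarrow> (nat \<Rightarrow> 'r) \<Rightarrow> (nat \<Rightarrow> 'r)" where
  "vscale r f = (\<lambda>i. r * f i)"

definition Syz :: "('r::comm_ring_1 \<Rightarrow> 'm::ab_group_add \<Rightarrow> 'm) \<Rightarrow> nat \<Rightarrow> (nat \<Rightarrow> 'm) \<Rightarrow> (nat \<Rightarrow> 'r) set" where
  "Syz scale n u = {f \<in> free_carrier n. (\<Sum>i<n. scale (f i) (u i)) = 0}"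

(* B-grading of R^n associated to b_1..b_n:
   (R^n)_b = sum_i sum_{a. a.b_i = b} R_a e_i  (at most one such a, by cancellativity) *)
definition assoc_grading ::
  "('a \<Rightarrow> 'r::comm_ring_1 set) \<Rightarrow> ('a \<Rightarrow> 'b \<Rightarrow> 'b) \<Rightarrow> (nat \<Rightarrow> 'b) \<Rightarrow> nat \<Rightarrow> 'b \<Rightarrow> (nat \<Rightarrow> 'r) set" where
  "assoc_grading GR act bs n b =
     {f \<in> free_carrier n. \<forall>i<n. f i = 0 \<or> (\<exists>a. act a (bs i) = b \<and> f i \<in> GR a)}"

end

theory Submission
  imports Defs
begin

text \<open>
  Write \<open>B\<close> for the grading of \<open>R\<^sup>n\<close> associated to the degrees of the \<open>m\<^sub>i\<close>.
  For \<open>x\<close> homogeneous of \<open>B\<close>-degree \<open>b\<close>, the element \<open>\<Sum> x\<^sub>i m\<^sub>i\<close> has all components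
  in degrees \<open>\<le> b\<close>, and its \<open>b\<close>-component is \<open>\<Sum> x\<^sub>i lf(m\<^sub>i)\<close>. Two consequences:
  the \<open>B\<close>-leading component of a syzygy of the \<open>m\<^sub>i\<close> is a syzygy of the \<open>lf(m\<^sub>i)\<close>;
  and for a homogeneous syzygy \<open>s\<^sub>j\<close> of the \<open>lf(m\<^sub>i)\<close>, the element \<open>\<Sum> s\<^sub>j\<^sub>i m\<^sub>i\<close> lies strictly
  below \<open>deg s\<^sub>j\<close>, hence so does the correction \<open>h\<^sub>j\<close>, and \<open>s\<^sub>j - h\<^sub>j\<close> has \<open>B\<close>-leading form
  \<open>s\<^sub>j\<close>. Since the \<open>B'\<close>-grading refines \<open>B\<close>, the \<open>B'\<close>-leading form of any element equals
  that of its \<open>B\<close>-leading component, so both facts transfer to \<open>B'\<close>-leading forms and the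
  Macaulay basis property of the \<open>s\<^sub>j\<close> passes to the \<open>s\<^sub>j - h\<^sub>j\<close>.
\<close>

definition hsupp :: "('i \<Rightarrow> 'm::ab_group_add set) \<Rightarrow> 'm \<Rightarrow> 'i set" where
  "hsupp G m = {i. hcomp G i m \<noteq> 0}"

lemma decomp_sum_superset:
  assumes "is_decomp G m f" "finite S" "{i. f i \<noteq> 0} \<subseteq> S"
  shows "sum f S = m"
proof -
  have "sum f S = sum f {i. f i \<noteq> 0}"
    by (rule sum.mono_neutral_right) (use assms in auto)
  then show ?thesis using assms(1) unfolding is_decomp_def by simp
qed

lemma is_decompI:
  assumes "finite S" "\<And>i. f i \<in> G i" "{i. f i \<noteq> 0} \<subseteq> S" "sum f S = m"
  shows "is_decomp G m f"
proof -
  have "sum f S = sum f {i. f i \<noteq> 0}"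
    by (rule sum.mono_neutral_right) (use assms in auto)
  then show ?thesis
    using assms finite_subset unfolding is_decomp_def by auto
qed

locale grading =
  fixes C :: "'m::ab_group_add set" and G :: "'i::linorder \<Rightarrow> 'm set"
  assumes is_grading: "is_grading C G"
begin

lemma zero_mem: "0 \<in> G i"
  and add_mem: "x \<in> G i \<Longrightarrow> y \<in> G i \<Longrightarrow> x + y \<in> G i"
  and uminus_mem: "x \<in> G i \<Longrightarrow> - x \<in> G i"
  using is_grading unfolding is_grading_def by auto

lemma sum_mem: "(\<And>x. x \<in> I \<Longrightarrow> u x \<in> G i) \<Longrightarrow> sum u I \<in> G i"
  by (induct I rule: infinite_finite_induct) (auto intro: zero_mem add_mem)

lemma mem_iff_decomp: "m \<in> C \<longleftrightarrow> (\<exists>f. is_decomp G m f)"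
  using is_grading unfolding is_grading_def by auto

lemma hcomp_eq:
  assumes "is_decomp G m f" shows "hcomp G i m = f i"
proof -
  have "\<exists>!f. is_decomp G m f"
    using assms is_grading mem_iff_decomp unfolding is_grading_def by blast
  then show ?thesis
    unfolding hcomp_def using assms by (metis the1_equality)
qed

lemma decomp_hcomp: "m \<in> C \<Longrightarrow> is_decomp G m (\<lambda>i. hcomp G i m)"
  using hcomp_eq mem_iff_decomp by fastforce

lemma hcomp_mem: "m \<in> C \<Longrightarrow> hcomp G i m \<in> G i"
  using decomp_hcomp unfolding is_decomp_def by auto

lemma finite_hsupp: "m \<in> C \<Longrightarrow> finite (hsupp G m)"
  using decomp_hcomp unfolding is_decomp_def hsupp_def by auto

lemma sum_hcomp:
  "m \<in> C \<Longrightarrow> finite S \<Longrightarrow> hsupp G m \<subseteq> S \<Longrightarrow> (\<Sum>i\<in>S. hcomp G i m) = m"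
  using decomp_sum_superset[OF decomp_hcomp] unfolding hsupp_def by blast

lemma decomp_homogeneous: "x \<in> G j \<Longrightarrow> is_decomp G x (\<lambda>i. if i = j then x else 0)"
  by (rule is_decompI[of "{j}"]) (auto intro: zero_mem)

lemma homogeneous_mem: "x \<in> G j \<Longrightarrow> x \<in> C"
  using decomp_homogeneous mem_iff_decomp by blast

lemma hcomp_homogeneous: "x \<in> G j \<Longrightarrow> hcomp G i x = (if i = j then x else 0)"
  using hcomp_eq[OF decomp_homogeneous] .

lemma zero_in_carrier: "0 \<in> C"
  and hcomp_zero [simp]: "hcomp G i 0 = 0"
  using homogeneous_mem[OF zero_mem] hcomp_homogeneous[OF zero_mem] by auto

lemma add_in_carrier: "a \<in> C \<Longrightarrow> b \<in> C \<Longrightarrow> a + b \<in> C"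
  and hcomp_add: "a \<in> C \<Longrightarrow> b \<in> C \<Longrightarrow> hcomp G i (a + b) = hcomp G i a + hcomp G i b"
proof -
  assume a: "a \<in> C" and b: "b \<in> C"
  let ?S = "hsupp G a \<union> hsupp G b"
  have "is_decomp G (a + b) (\<lambda>i. hcomp G i a + hcomp G i b)"
  proof (rule is_decompI)
    show "finite ?S" using a b finite_hsupp by blast
    show "(\<Sum>i\<in>?S. hcomp G i a + hcomp G i b) = a + b"
      using a b \<open>finite ?S\<close> by (simp add: sum.distrib sum_hcomp)
  qed (auto simp: hsupp_def intro: add_mem hcomp_mem a b)
  then show "a + b \<in> C" "hcomp G i (a + b) = hcomp G i a + hcomp G i b"
    using mem_iff_decomp hcomp_eq by blast+
qed

lemma uminus_in_carrier: "a \<in> C \<Longrightarrow> - a \<in> C"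
  and hcomp_uminus: "a \<in> C \<Longrightarrow> hcomp G i (- a) = - hcomp G i a"
proof -
  assume a: "a \<in> C"
  have "is_decomp G (- a) (\<lambda>i. - hcomp G i a)"
    using decomp_hcomp[OF a] uminus_mem unfolding is_decomp_def by (auto simp: sum_negf)
  then show "- a \<in> C" "hcomp G i (- a) = - hcomp G i a"
    using mem_iff_decomp hcomp_eq by blast+
qed

lemma diff_in_carrier: "a \<in> C \<Longrightarrow> b \<in> C \<Longrightarrow> a - b \<in> C"
  and hcomp_diff: "a \<in> C \<Longrightarrow> b \<in> C \<Longrightarrow> hcomp G i (a - b) = hcomp G i a - hcomp G i b"
  by (simp_all only: diff_conv_add_uminus add_in_carrier uminus_in_carrier hcomp_add hcomp_uminus)

lemma sum_in_carrier: "(\<And>x. x \<in> I \<Longrightarrow> u x \<in> C) \<Longrightarrow> sum u I \<in> C"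
  and hcomp_sum: "(\<And>x. x \<in> I \<Longrightarrow> u x \<in> C) \<Longrightarrow> hcomp G i (sum u I) = (\<Sum>x\<in>I. hcomp G i (u x))"
  by (induct I rule: infinite_finite_induct)
    (auto simp: zero_in_carrier add_in_carrier hcomp_add)

lemma eqI: "a \<in> C \<Longrightarrow> b \<in> C \<Longrightarrow> (\<And>i. hcomp G i a = hcomp G i b) \<Longrightarrow> a = b"
  using sum_hcomp[of "a - b" "{}"] by (simp add: hsupp_def hcomp_diff diff_in_carrier)

lemma hsupp_eq_empty_iff: "m \<in> C \<Longrightarrow> hsupp G m = {} \<longleftrightarrow> m = 0"
  using eqI[OF _ zero_in_carrier] by (auto simp: hsupp_def)

lemma hsupp_add: "a \<in> C \<Longrightarrow> b \<in> C \<Longrightarrow> hsupp G (a + b) \<subseteq> hsupp G a \<union> hsupp G b"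
  by (auto simp: hsupp_def hcomp_add)

lemma hsupp_sum:
  "(\<And>x. x \<in> I \<Longrightarrow> u x \<in> C) \<Longrightarrow> hsupp G (sum u I) \<subseteq> (\<Union>x\<in>I. hsupp G (u x))"
  by (auto simp: hsupp_def hcomp_sum intro: ccontr)

lemma hsupp_homogeneous: "x \<in> G j \<Longrightarrow> hsupp G x \<subseteq> {j}"
  by (auto simp: hsupp_def hcomp_homogeneous)

lemma hdeg_in_hsupp: "m \<in> C \<Longrightarrow> m \<noteq> 0 \<Longrightarrow> hdeg G m \<in> hsupp G m"
  unfolding hdeg_def hsupp_def[symmetric]
  by (rule Max_in) (auto simp: finite_hsupp hsupp_eq_empty_iff)

lemma le_hdeg: "m \<in> C \<Longrightarrow> i \<in> hsupp G m \<Longrightarrow> i \<le> hdeg G m"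
  unfolding hdeg_def hsupp_def[symmetric] by (rule Max_ge) (auto simp: finite_hsupp)

lemma hdeg_eqI: "m \<in> C \<Longrightarrow> d \<in> hsupp G m \<Longrightarrow> (\<And>i. i \<in> hsupp G m \<Longrightarrow> i \<le> d) \<Longrightarrow> hdeg G m = d"
  unfolding hdeg_def hsupp_def[symmetric] by (rule Max_eqI) (auto simp: finite_hsupp)

lemma lf_mem: "m \<in> C \<Longrightarrow> lf G m \<in> G (hdeg G m)"
  unfolding lf_def by (rule hcomp_mem)

lemma lf_zero [simp]: "lf G 0 = 0"
  by (simp add: lf_def)

lemma lf_eq_zero_iff: "m \<in> C \<Longrightarrow> lf G m = 0 \<longleftrightarrow> m = 0"
  using hdeg_in_hsupp by (auto simp: lf_def hsupp_def)

lemma hsupp_diff_lf: "m \<in> C \<Longrightarrow> hsupp G (m - lf G m) \<subseteq> {..<hdeg G m}"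
proof
  fix i assume m: "m \<in> C" and i: "i \<in> hsupp G (m - lf G m)"
  have "hcomp G i (m - lf G m) = hcomp G i m - (if i = hdeg G m then lf G m else 0)"
    using m by (simp add: hcomp_diff homogeneous_mem[OF lf_mem] hcomp_homogeneous[OF lf_mem])
  with i have "i \<noteq> hdeg G m" "i \<in> hsupp G m"
    by (auto simp: hsupp_def lf_def split: if_splits)
  then show "i \<in> {..<hdeg G m}"
    using le_hdeg[OF m] by fastforce
qed

lemma lf_diff_lower:
  assumes x: "x \<in> G d" "x \<noteq> 0" and y: "y \<in> C" "hsupp G y \<subseteq> {..<d}"
  shows "lf G (x - y) = x"
proof -
  have xC: "x \<in> C" using homogeneous_mem[OF x(1)] .
  have comp: "hcomp G i (x - y) = (if i = d then x else 0) - hcomp G i y" for i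
    using hcomp_diff[OF xC y(1)] hcomp_homogeneous[OF x(1)] by simp
  have ydd: "hcomp G d y = 0" using y(2) by (auto simp: hsupp_def)
  have "hdeg G (x - y) = d"
  proof (rule hdeg_eqI[OF diff_in_carrier[OF xC y(1)]])
    show "d \<in> hsupp G (x - y)" using comp ydd x(2) by (simp add: hsupp_def)
    show "i \<le> d" if "i \<in> hsupp G (x - y)" for i
      using that y(2) comp by (cases "i = d") (auto simp: hsupp_def)
  qed
  then show ?thesis using comp ydd by (simp add: lf_def)
qed

end

text \<open>\<open>G\<close> is the coarsening of \<open>G'\<close> along \<open>g\<close>: \<open>G b = \<Oplus>\<^bsub>g b' = b\<^esub> G' b'\<close>.\<close>

locale grading_refinement = fine: grading C G'
  for C :: "'m::ab_group_add set" and G' :: "'j::linorder \<Rightarrow> 'm set" +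
  fixes g :: "'j \<Rightarrow> 'i::linorder" and G :: "'i \<Rightarrow> 'm set"
  assumes mono_g: "mono g"
    and coarse_eq: "G b = {x \<in> C. \<forall>b'\<in>hsupp G' x. g b' = b}"
begin

lemma coarse_subset_carrier: "x \<in> G b \<Longrightarrow> x \<in> C"
  and hsupp_coarse: "x \<in> G b \<Longrightarrow> b' \<in> hsupp G' x \<Longrightarrow> g b' = b"
  using coarse_eq by auto

lemma hcomp_fine_decomp:
  assumes f: "is_decomp G m f"
  shows "hcomp G' b' m = hcomp G' b' (f (g b'))"
proof -
  let ?S = "{b. f b \<noteq> 0}"
  have fin: "finite ?S" and fG: "\<And>b. f b \<in> G b" and m: "m = sum f ?S"
    using f unfolding is_decomp_def by auto
  have "hcomp G' b' m = (\<Sum>b\<in>?S. hcomp G' b' (f b))"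
    using m fine.hcomp_sum coarse_subset_carrier[OF fG] by metis
  also have "\<dots> = (\<Sum>b\<in>?S. if b = g b' then hcomp G' b' (f (g b')) else 0)"
    using hsupp_coarse[OF fG] by (intro sum.cong) (auto simp: hsupp_def)
  also have "\<dots> = hcomp G' b' (f (g b'))"
    using fin by (simp add: sum.delta)
  finally show ?thesis .
qed

lemma decomp_coarse:
  assumes m: "m \<in> C"
  shows "is_decomp G m (\<lambda>b. \<Sum>b'\<in>{b'\<in>hsupp G' m. g b' = b}. hcomp G' b' m)"
    (is "is_decomp G m ?f")
proof (rule is_decompI)
  have fin: "finite (hsupp G' m)" using fine.finite_hsupp[OF m] .
  have comp_C: "hcomp G' b' m \<in> C" for b'
    using fine.homogeneous_mem[OF fine.hcomp_mem[OF m]] .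
  show "finite (g ` hsupp G' m)" using fin by simp
  show "?f b \<in> G b" for b
  proof -
    let ?T = "{b'\<in>hsupp G' m. g b' = b}"
    have fin_T: "finite ?T" using fin by simp
    have comp: "hcomp G' c (?f b) = (if c \<in> ?T then hcomp G' c m else 0)" for c
    proof -
      have "hcomp G' c (?f b) = (\<Sum>b'\<in>?T. hcomp G' c (hcomp G' b' m))"
        by (rule fine.hcomp_sum) (rule comp_C)
      also have "\<dots> = (\<Sum>b'\<in>?T. if c = b' then hcomp G' b' m else 0)"
        using fine.hcomp_homogeneous[OF fine.hcomp_mem[OF m]] by (intro sum.cong) simp_all
      also have "\<dots> = (if c \<in> ?T then hcomp G' c m else 0)"
        by (rule sum.delta'[OF fin_T])
      finally show ?thesis .
    qed
    then have "c \<in> hsupp G' (?f b) \<Longrightarrow> g c = b" for c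
      by (auto simp: hsupp_def split: if_splits)
    then show ?thesis
      unfolding coarse_eq using fine.sum_in_carrier[of _ "\<lambda>b'. hcomp G' b' m", OF comp_C] by blast
  qed
  show "{b. ?f b \<noteq> 0} \<subseteq> g ` hsupp G' m"
  proof
    fix b assume b: "b \<in> {b. ?f b \<noteq> 0}"
    show "b \<in> g ` hsupp G' m"
    proof (rule ccontr)
      assume "b \<notin> g ` hsupp G' m"
      then have "{b'\<in>hsupp G' m. g b' = b} = {}" by blast
      then show False using b by (simp only: mem_Collect_eq sum.empty) simp
    qed
  qed
  show "sum ?f (g ` hsupp G' m) = m"
    using sum.image_gen[OF fin, of "\<lambda>b'. hcomp G' b' m" g] fine.sum_hcomp[OF m fin] by simp
qed

lemma decomp_coarse_unique:
  assumes f1: "is_decomp G m f1" and f2: "is_decomp G m f2"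
  shows "f1 = f2"
proof
  fix b
  have fb: "f1 b \<in> G b" "f2 b \<in> G b" using f1 f2 unfolding is_decomp_def by auto
  show "f1 b = f2 b"
  proof (rule fine.eqI[OF coarse_subset_carrier[OF fb(1)] coarse_subset_carrier[OF fb(2)]])
    fix b'
    show "hcomp G' b' (f1 b) = hcomp G' b' (f2 b)"
    proof (cases "g b' = b")
      case True
      then show ?thesis using hcomp_fine_decomp[OF f1] hcomp_fine_decomp[OF f2] by metis
    next
      case False
      then have "b' \<notin> hsupp G' (f1 b)" "b' \<notin> hsupp G' (f2 b)"
        using hsupp_coarse[OF fb(1)] hsupp_coarse[OF fb(2)] by auto
      then show ?thesis by (simp add: hsupp_def)
    qed
  qed
qed

lemma is_grading_coarse: "is_grading C G"
proof -
  have closed: "0 \<in> G b \<and> (\<forall>x\<in>G b. \<forall>y\<in>G b. x + y \<in> G b \<and> - x \<in> G b)" for b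
  proof (intro conjI ballI)
    show "0 \<in> G b" by (simp add: coarse_eq fine.zero_in_carrier hsupp_def)
    fix x y assume x: "x \<in> G b" and y: "y \<in> G b"
    note xC = coarse_subset_carrier[OF x] and yC = coarse_subset_carrier[OF y]
    show "x + y \<in> G b"
      using fine.hsupp_add[OF xC yC] hsupp_coarse[OF x] hsupp_coarse[OF y]
      by (auto simp: coarse_eq fine.add_in_carrier[OF xC yC])
    show "- x \<in> G b"
      using hsupp_coarse[OF x]
      by (auto simp: coarse_eq fine.uminus_in_carrier[OF xC] hsupp_def fine.hcomp_uminus[OF xC])
  qed
  have "m \<in> C \<longleftrightarrow> (\<exists>f. is_decomp G m f)" for m
  proof
    assume "\<exists>f. is_decomp G m f"
    then obtain f where "is_decomp G m f" by blast
    then show "m \<in> C"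
      unfolding is_decomp_def using fine.sum_in_carrier coarse_subset_carrier by metis
  qed (use decomp_coarse in blast)
  then show ?thesis
    unfolding is_grading_def using closed decomp_coarse_unique by blast
qed

sublocale coarse: grading C G
  by unfold_locales (rule is_grading_coarse)

lemma hcomp_fine_coarse: "x \<in> C \<Longrightarrow> hcomp G' b' x = hcomp G' b' (hcomp G (g b') x)"
  by (rule hcomp_fine_decomp[OF coarse.decomp_hcomp])

lemma lf_fine_coarse:
  assumes x: "x \<in> C" "x \<noteq> 0"
  shows "lf G' x = lf G' (lf G x)"
proof -
  define b where "b = hdeg G x"
  define p where "p = lf G x"
  have pG: "p \<in> G b" unfolding p_def b_def by (rule coarse.lf_mem[OF x(1)])
  have pC: "p \<in> C" using coarse_subset_carrier[OF pG] .
  have p0: "p \<noteq> 0" unfolding p_def using coarse.lf_eq_zero_iff x by blast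
  define d where "d = hdeg G' p"
  have d: "d \<in> hsupp G' p" unfolding d_def by (rule fine.hdeg_in_hsupp[OF pC p0])
  have gd: "g d = b" using hsupp_coarse[OF pG d] .
  have top: "hcomp G' d x = hcomp G' d p"
    using hcomp_fine_coarse[OF x(1)] gd by (simp add: p_def b_def lf_def)
  have "hdeg G' x = d"
  proof (rule fine.hdeg_eqI[OF x(1)])
    show "d \<in> hsupp G' x" using d top by (simp add: hsupp_def)
    fix b' assume b': "b' \<in> hsupp G' x"
    then have "g b' \<in> hsupp G x"
      using hcomp_fine_coarse[OF x(1)] by (force simp: hsupp_def)
    then have "g b' \<le> b" unfolding b_def by (rule coarse.le_hdeg[OF x(1)])
    show "b' \<le> d"
    proof (cases "g b' = b")
      case True
      then have "b' \<in> hsupp G' p"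
        using b' hcomp_fine_coarse[OF x(1)] by (simp add: hsupp_def p_def b_def lf_def)
      then show ?thesis unfolding d_def by (rule fine.le_hdeg[OF pC])
    next
      case False
      with \<open>g b' \<le> b\<close> gd have "g b' < g d" by simp
      then show ?thesis using mono_g by (metis le_cases monoD not_le)
    qed
  qed
  then show ?thesis using top by (simp add: lf_def d_def p_def)
qed

end

definition lincomb :: "('r \<Rightarrow> 'm \<Rightarrow> 'm::ab_group_add) \<Rightarrow> nat \<Rightarrow> (nat \<Rightarrow> 'r) \<Rightarrow> (nat \<Rightarrow> 'm) \<Rightarrow> 'm" where
  "lincomb scale n x u = (\<Sum>i<n. scale (x i) (u i))"

lemma Syz_eq: "Syz scale n u = {x \<in> free_carrier n. lincomb scale n x u = 0}"
  by (simp add: Syz_def lincomb_def)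

context module
begin

lemma lincomb_diff: "lincomb scale n (x - y) u = lincomb scale n x u - lincomb scale n y u"
  by (simp add: lincomb_def scale_left_diff_distrib sum_subtractf)

lemma lincomb_sum: "lincomb scale n (sum x I) u = (\<Sum>c\<in>I. lincomb scale n (x c) u)"
proof (induct I rule: infinite_finite_induct)
  case (insert c I)
  then show ?case
    by (simp add: lincomb_def scale_left_distrib sum.distrib)
qed (simp_all add: lincomb_def)

lemma lincomb_add_right:
  "lincomb scale n x (\<lambda>i. u i + v i) = lincomb scale n x u + lincomb scale n x v"
  by (simp add: lincomb_def scale_right_distrib sum.distrib)

end

locale graded_module = module smult + N: grading "UNIV :: 'n set" GN
  for smult :: "'r::comm_ring_1 \<Rightarrow> 'n::ab_group_add \<Rightarrow> 'n" and GN :: "'b::linorder \<Rightarrow> 'n set" +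
  fixes GR :: "'a \<Rightarrow> 'r set" and act :: "'a \<Rightarrow> 'b \<Rightarrow> 'b"
  assumes smult_graded: "r \<in> GR a \<Longrightarrow> x \<in> GN b \<Longrightarrow> smult r x \<in> GN (act a b)"
    and strict_mono_act: "strict_mono (act a)"
begin

lemma hsupp_smult: "r \<in> GR a \<Longrightarrow> hsupp GN (smult r z) \<subseteq> act a ` hsupp GN z"
proof -
  assume r: "r \<in> GR a"
  have "smult r z = (\<Sum>c\<in>hsupp GN z. smult r (hcomp GN c z))"
    using N.sum_hcomp[of z "hsupp GN z"] N.finite_hsupp[of z] by (simp add: scale_sum_right[symmetric])
  also have "hsupp GN \<dots> \<subseteq> (\<Union>c\<in>hsupp GN z. hsupp GN (smult r (hcomp GN c z)))"
    by (rule N.hsupp_sum) simp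
  also have "\<dots> \<subseteq> act a ` hsupp GN z"
    using N.hsupp_homogeneous[OF smult_graded[OF r N.hcomp_mem]] by blast
  finally show ?thesis .
qed

lemma hsupp_lincomb_assoc_grading:
  assumes x: "x \<in> assoc_grading GR act (\<lambda>i. hdeg GN (u i)) n b"
  shows "hsupp GN (lincomb smult n x u) \<subseteq> {..b}"
    and "hcomp GN b (lincomb smult n x u) = lincomb smult n x (\<lambda>i. lf GN (u i))"
proof -
  let ?L = "lincomb smult n x (\<lambda>i. lf GN (u i))"
  let ?T = "lincomb smult n x (\<lambda>i. u i - lf GN (u i))"
  have xi: "x i = 0 \<or> (\<exists>a. act a (hdeg GN (u i)) = b \<and> x i \<in> GR a)" if "i < n" for i
    using x that unfolding assoc_grading_def by auto
  have L: "?L \<in> GN b"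
    unfolding lincomb_def
    by (rule N.sum_mem) (use xi smult_graded N.lf_mem N.zero_mem in fastforce)
  have "hsupp GN ?T \<subseteq> (\<Union>i<n. hsupp GN (smult (x i) (u i - lf GN (u i))))"
    unfolding lincomb_def by (rule N.hsupp_sum) simp
  also have "\<dots> \<subseteq> {..<b}"
  proof (intro UN_least)
    fix i assume "i \<in> {..<n}"
    then consider "x i = 0" | a where "act a (hdeg GN (u i)) = b" "x i \<in> GR a"
      using xi by auto
    then show "hsupp GN (smult (x i) (u i - lf GN (u i))) \<subseteq> {..<b}"
    proof cases
      case 2
      have "hsupp GN (smult (x i) (u i - lf GN (u i))) \<subseteq> act a ` {..<hdeg GN (u i)}"
        using hsupp_smult[OF 2(2)] N.hsupp_diff_lf by blast
      also have "\<dots> \<subseteq> {..<b}"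
        using strict_mono_act 2(1) by (auto simp: strict_mono_def)
      finally show ?thesis .
    qed (simp add: hsupp_def)
  qed
  finally have T: "hsupp GN ?T \<subseteq> {..<b}" .
  have split: "lincomb smult n x u = ?L + ?T"
    using lincomb_add_right[of n x "\<lambda>i. lf GN (u i)" "\<lambda>i. u i - lf GN (u i)"] by simp
  show "hsupp GN (lincomb smult n x u) \<subseteq> {..b}"
    using split N.hsupp_add[of ?L ?T] N.hsupp_homogeneous[OF L] T by fastforce
  show "hcomp GN b (lincomb smult n x u) = ?L"
    using split T N.hcomp_homogeneous[OF L] by (auto simp: N.hcomp_add hsupp_def)
qed

end

locale syzygy_refinement = graded_module smult GN GR act +
  grading_refinement "free_carrier n" G' g "assoc_grading GR act (\<lambda>i. hdeg GN (u i)) n"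
  for smult :: "'r::comm_ring_1 \<Rightarrow> 'n::ab_group_add \<Rightarrow> 'n" and GN :: "'b::linorder \<Rightarrow> 'n set"
    and GR :: "'a \<Rightarrow> 'r set" and act :: "'a \<Rightarrow> 'b \<Rightarrow> 'b"
    and n :: nat and u :: "nat \<Rightarrow> 'n"
    and G' :: "'b'::linorder \<Rightarrow> (nat \<Rightarrow> 'r) set" and g :: "'b' \<Rightarrow> 'b"
begin

abbreviation assoc_gr :: "'b \<Rightarrow> (nat \<Rightarrow> 'r) set" where
  "assoc_gr \<equiv> assoc_grading GR act (\<lambda>i. hdeg GN (u i)) n"

lemma lf_assoc_syzygy:
  assumes p: "p \<in> Syz smult n u" "p \<noteq> 0"
  shows "lf assoc_gr p \<in> Syz smult n (\<lambda>i. lf GN (u i))"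
proof -
  have pC: "p \<in> free_carrier n" using p(1) by (simp add: Syz_eq)
  define b where "b = hdeg assoc_gr p"
  define S where "S = hsupp assoc_gr p"
  have fin: "finite S" unfolding S_def by (rule coarse.finite_hsupp[OF pC])
  have bS: "b \<in> S" unfolding S_def b_def by (rule coarse.hdeg_in_hsupp[OF pC p(2)])
  have comp: "hcomp assoc_gr c p \<in> assoc_gr c" for c by (rule coarse.hcomp_mem[OF pC])
  \<comment> \<open>only the leading \<open>assoc_gr\<close>-component of \<open>p\<close> reaches degree \<open>b\<close> in \<open>N\<close>\<close>
  have lower: "hcomp GN b (lincomb smult n (hcomp assoc_gr c p) u) = 0" if "c \<in> S - {b}" for c
  proof -
    have "c < b" using that coarse.le_hdeg[OF pC] unfolding S_def b_def by fastforce
    then have "b \<notin> hsupp GN (lincomb smult n (hcomp assoc_gr c p) u)"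
      using hsupp_lincomb_assoc_grading(1)[OF comp, of c] by auto
    then show ?thesis by (simp add: hsupp_def)
  qed
  have "0 = hcomp GN b (lincomb smult n p u)"
    using p(1) by (simp add: Syz_eq)
  also have "p = (\<Sum>c\<in>S. hcomp assoc_gr c p)"
    using coarse.sum_hcomp[OF pC fin] by (simp add: S_def)
  also have "lincomb smult n \<dots> u = (\<Sum>c\<in>S. lincomb smult n (hcomp assoc_gr c p) u)"
    by (rule lincomb_sum)
  also have "hcomp GN b \<dots> = (\<Sum>c\<in>S. hcomp GN b (lincomb smult n (hcomp assoc_gr c p) u))"
    by (simp add: N.hcomp_sum)
  also have "\<dots> = hcomp GN b (lincomb smult n (hcomp assoc_gr b p) u)"
    using lower by (simp add: sum.remove[OF fin bS])
  also have "\<dots> = lincomb smult n (lf assoc_gr p) (\<lambda>i. lf GN (u i))"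
    unfolding lf_def[of assoc_gr p] b_def by (rule hsupp_lincomb_assoc_grading(2)[OF comp])
  finally show ?thesis
    using coarse_subset_carrier[OF coarse.lf_mem[OF pC]] by (simp add: Syz_eq)
qed

lemma lf_syzygy_eq_lf_syzygy_lf:
  assumes q: "q \<in> Syz smult n u" "q \<noteq> 0"
  shows "\<exists>p\<in>Syz smult n (\<lambda>i. lf GN (u i)). p \<noteq> 0 \<and> lf G' q = lf G' p"
proof
  have qC: "q \<in> free_carrier n" using q(1) by (simp add: Syz_eq)
  show "lf assoc_gr q \<noteq> 0 \<and> lf G' q = lf G' (lf assoc_gr q)"
    using coarse.lf_eq_zero_iff[OF qC] q(2) lf_fine_coarse[OF qC q(2)] by blast
qed (rule lf_assoc_syzygy[OF q])

lemma syzygy_correction: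
  assumes s: "s \<in> Syz smult n (\<lambda>i. lf GN (u i))" "s \<in> assoc_gr b" "s \<noteq> 0"
    and h: "h \<in> free_carrier n" "lincomb smult n h u = lincomb smult n s u"
      "lincomb smult n s u = 0 \<Longrightarrow> h = 0"
      "lincomb smult n s u \<noteq> 0 \<Longrightarrow> hsupp assoc_gr h \<subseteq> {..hdeg GN (lincomb smult n s u)}"
  shows "s - h \<in> Syz smult n u" "s - h \<noteq> 0" "lf G' (s - h) = lf G' s"
proof -
  let ?v = "lincomb smult n s u"
  have "hcomp GN b ?v = 0"
    using hsupp_lincomb_assoc_grading(2)[OF s(2)] s(1) by (simp add: Syz_eq)
  have v: "hsupp GN ?v \<subseteq> {..<b}"
  proof
    fix c assume c: "c \<in> hsupp GN ?v"
    then have "c \<le> b" using hsupp_lincomb_assoc_grading(1)[OF s(2)] by auto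
    moreover have "c \<noteq> b" using c \<open>hcomp GN b ?v = 0\<close> by (auto simp: hsupp_def)
    ultimately show "c \<in> {..<b}" by simp
  qed
  have "hsupp assoc_gr h \<subseteq> {..<b}"
  proof (cases "?v = 0")
    case True
    then show ?thesis using h(3) by (simp add: hsupp_def)
  next
    case False
    then have "hdeg GN ?v < b" using v N.hdeg_in_hsupp[OF UNIV_I False] by auto
    then have "{..hdeg GN ?v} \<subseteq> {..<b}" by auto
    then show ?thesis using h(4)[OF False] by (rule order_trans[rotated])
  qed
  then have lf_coarse: "lf assoc_gr (s - h) = s"
    by (rule coarse.lf_diff_lower[OF s(2,3) h(1)])
  then show nz: "s - h \<noteq> 0" using s(3) by auto
  have sC: "s \<in> free_carrier n" using s(1) by (simp add: Syz_eq)
  show "s - h \<in> Syz smult n u"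
    unfolding Syz_eq using coarse.diff_in_carrier[OF sC h(1)] by (simp add: lincomb_diff h(2))
  show "lf G' (s - h) = lf G' s"
    using lf_fine_coarse[OF coarse.diff_in_carrier[OF sC h(1)] nz] lf_coarse by simp
qed

end

lemma (in module) macaulay_basis_transfer:
  assumes Y: "macaulay_basis scale G P (y ` I)" and I: "finite I"
    and x: "\<And>j. j \<in> I \<Longrightarrow> x j \<in> Q \<and> x j \<noteq> 0 \<and> lf G (x j) = lf G (y j)"
    and lf_Q: "\<And>q. q \<in> Q \<Longrightarrow> q \<noteq> 0 \<Longrightarrow> \<exists>p\<in>P. p \<noteq> 0 \<and> lf G q = lf G p"
  shows "macaulay_basis scale G Q (x ` I)"
proof -
  have lf_x: "lf G ` x ` I = lf G ` y ` I"
    unfolding image_image using x by (intro image_cong) auto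
  have span_P: "span {lf G p |p. p \<in> P \<and> p \<noteq> 0} = span (lf G ` x ` I)"
    using Y unfolding macaulay_basis_def lf_x by (elim conjE)
  have "{lf G q |q. q \<in> Q \<and> q \<noteq> 0} \<subseteq> span (lf G ` x ` I)"
  proof clarify
    fix q assume "q \<in> Q" "q \<noteq> 0"
    then obtain p where "p \<in> P" "p \<noteq> 0" "lf G q = lf G p" using lf_Q by blast
    then have "lf G q \<in> {lf G p |p. p \<in> P \<and> p \<noteq> 0}" by blast
    then show "lf G q \<in> span (lf G ` x ` I)"
      unfolding span_P[symmetric] by (rule span_base)
  qed
  moreover have "lf G ` x ` I \<subseteq> {lf G q |q. q \<in> Q \<and> q \<noteq> 0}"
    using x by blast
  then have "lf G ` x ` I \<subseteq> span {lf G q |q. q \<in> Q \<and> q \<noteq> 0}"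
    using span_superset by (rule order_trans)
  moreover have "x ` I \<subseteq> Q" "0 \<notin> x ` I"
    using x by force+
  ultimately show ?thesis
    using I unfolding macaulay_basis_def span_eq by blast
qed

theorem mainTheorem15:
  fixes of_k :: "'k::field \<Rightarrow> 'r::comm_ring_1"
    and GR :: "'a::{cancel_comm_monoid_add, wellorder} \<Rightarrow> 'r set"
    and act :: "'a \<Rightarrow> 'b::wellorder \<Rightarrow> 'b"
    and act' :: "'a \<Rightarrow> 'b'::wellorder \<Rightarrow> 'b'"
    and smult :: "'r \<Rightarrow> 'n::ab_group_add \<Rightarrow> 'n"
    and GN :: "'b \<Rightarrow> 'n set"
    and M :: "'n set"
    and n k :: nat
    and m :: "nat \<Rightarrow> 'n"
    and s h :: "nat \<Rightarrow> nat \<Rightarrow> 'r"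
    and G' :: "'b' \<Rightarrow> (nat \<Rightarrow> 'r) set"
    and g :: "'b' \<Rightarrow> 'b"
  assumes A_fg: "\<exists>S. finite S \<and> (\<forall>a::'a. a \<in> gen_monoid S)"
    and A_pos: "\<forall>a::'a. a \<noteq> 0 \<longrightarrow> 0 < a"
    and A_mono: "\<forall>a a' c::'a. a \<le> a' \<longrightarrow> a + c \<le> a' + c"
    and k_hom: "of_k 1 = 1" "\<forall>x y. of_k (x + y) = of_k x + of_k y" "\<forall>x y. of_k (x * y) = of_k x * of_k y"
    and R_grading: "is_grading (UNIV :: 'r set) GR"
    and R_mult: "\<forall>a a' x y. x \<in> GR a \<longrightarrow> y \<in> GR a' \<longrightarrow> x * y \<in> GR (a + a')"
    and R_kspace: "\<forall>a c x. x \<in> GR a \<longrightarrow> of_k c * x \<in> GR a"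
    and R_noeth: "noetherian_module ((*) :: 'r \<Rightarrow> 'r \<Rightarrow> 'r)"
    and act_0: "\<forall>b. act 0 b = b"
    and act_add: "\<forall>a a' b. act (a + a') b = act a (act a' b)"
    and act_mono1: "\<forall>a a' b. a \<le> a' \<longrightarrow> act a b \<le> act a' b"
    and act_mono2: "\<forall>a b b'. b \<le> b' \<longrightarrow> act a b \<le> act a b'"
    and act_canc1: "\<forall>a a' b. act a b = act a' b \<longrightarrow> a = a'"
    and act_canc2: "\<forall>a b b'. act a b = act a b' \<longrightarrow> b = b'"
    and act'_0: "\<forall>b. act' 0 b = b"
    and act'_add: "\<forall>a a' b. act' (a + a') b = act' a (act' a' b)"
    and act'_mono1: "\<forall>a a' b. a \<le> a' \<longrightarrow> act' a b \<le> act' a' b"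
    and act'_mono2: "\<forall>a b b'. b \<le> b' \<longrightarrow> act' a b \<le> act' a b'"
    and act'_canc1: "\<forall>a a' b. act' a b = act' a' b \<longrightarrow> a = a'"
    and act'_canc2: "\<forall>a b b'. act' a b = act' a b' \<longrightarrow> b = b'"
    and N_module: "module smult"
    and N_grading: "is_grading (UNIV :: 'n set) GN"
    and N_mult: "\<forall>a b r x. r \<in> GR a \<longrightarrow> x \<in> GN b \<longrightarrow> smult r x \<in> GN (act a b)"
    and N_noeth: "noetherian_module smult"
    and M_sub: "module.subspace smult M"
    and X_mac: "macaulay_basis smult GN M (m ` {..<n})"
    and s_syz: "\<forall>j<k. s j \<in> Syz smult n (\<lambda>i. lf GN (m i))"
    and s_hom: "\<forall>j<k. homogeneous (assoc_grading GR act (\<lambda>i. hdeg GN (m i)) n) (s j)"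
    and s_gen: "module.span vscale (s ` {..<k}) = Syz smult n (\<lambda>i. lf GN (m i))"
    and h_carrier: "\<forall>j<k. h j \<in> free_carrier n"
    and h_eq: "\<forall>j<k. (\<Sum>i<n. smult (s j i) (m i)) = (\<Sum>i<n. smult (h j i) (m i))"
    and h_zero: "\<forall>j<k. (\<Sum>i<n. smult (s j i) (m i)) = 0 \<longrightarrow> h j = 0"
    and h_deg: "\<forall>j<k. (\<Sum>i<n. smult (s j i) (m i)) \<noteq> 0 \<longrightarrow>
        (\<forall>b. hcomp (assoc_grading GR act (\<lambda>i. hdeg GN (m i)) n) b (h j) \<noteq> 0 \<longrightarrow>
             b \<le> hdeg GN (\<Sum>i<n. smult (s j i) (m i)))"
    and G'_grading: "is_grading (free_carrier n) G'"
    and G'_mult: "\<forall>a b' r x. r \<in> GR a \<longrightarrow> x \<in> G' b' \<longrightarrow> vscale r x \<in> G' (act' a b')"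
    and g_mono: "mono g"
    and g_act: "\<forall>a b'. g (act' a b') = act a (g b')"
    and g_refines: "\<forall>b. assoc_grading GR act (\<lambda>i. hdeg GN (m i)) n b =
        {x \<in> free_carrier n. \<forall>b'. hcomp G' b' x \<noteq> 0 \<longrightarrow> g b' = b}"
    and s_mac: "macaulay_basis vscale G' (Syz smult n (\<lambda>i. lf GN (m i))) (s ` {..<k})"
  shows "macaulay_basis vscale G' (Syz smult n m) ((\<lambda>j. s j - h j) ` {..<k})"
proof -
  interpret V: module vscale
    by unfold_locales (auto simp: vscale_def algebra_simps)
  interpret syzygy_refinement smult GN GR act n m G' g
  proof (intro_locales)
    show "module smult" by (rule N_module)
    show "grading UNIV GN" "grading (free_carrier n) G'"
      using N_grading G'_grading by (simp_all add: grading_def)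
    show "graded_module_axioms smult GN GR act"
    proof
      show "strict_mono (act a)" for a
        using act_mono2 act_canc2 by (metis order.strict_iff_order strict_monoI)
    qed (use N_mult in blast)
    show "grading_refinement_axioms (free_carrier n) G' g (assoc_grading GR act (\<lambda>i. hdeg GN (m i)) n)"
      using g_mono g_refines by unfold_locales (auto simp: hsupp_def)
  qed
  have correction: "s j - h j \<in> Syz smult n m \<and> s j - h j \<noteq> 0 \<and> lf G' (s j - h j) = lf G' (s j)"
    if j: "j < k" for j
  proof -
    obtain b where b: "s j \<in> assoc_gr b" using s_hom j by (auto simp: homogeneous_def)
    have "s j \<noteq> 0" using s_mac j by (auto simp: macaulay_basis_def)
    moreover have "lincomb smult n (h j) m = lincomb smult n (s j) m"
      using h_eq j by (simp add: lincomb_def)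
    moreover have "lincomb smult n (s j) m = 0 \<Longrightarrow> h j = 0"
      using h_zero j by (simp add: lincomb_def)
    moreover have "hsupp assoc_gr (h j) \<subseteq> {..hdeg GN (lincomb smult n (s j) m)}"
      if "lincomb smult n (s j) m \<noteq> 0"
      using h_deg j that by (auto simp: lincomb_def hsupp_def)
    ultimately show ?thesis
      using syzygy_correction[OF _ b] s_syz h_carrier j by blast
  qed
  show ?thesis
    by (intro V.macaulay_basis_transfer[OF s_mac finite_lessThan] correction
        lf_syzygy_eq_lf_syzygy_lf) auto
qed

end
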